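(* Let $G$ be a discrete group, $\mathbf k\subseteq{\rm Seq}(\mathbf C)$ a $\sigma$-subring with constants $\mathbf C$, $\alpha\in\mathcal C_c(G,\mathbf k)$, and $\phi$ the fundamental solution of $\sigma(s)=\alpha\star s$. Then: (a) ${\rm Sol}_c(\alpha,L^c)$ is a monogenous right $G$-module, namely ${\rm Sol}_c(\alpha,L^c)=\bigoplus_{g\in G}\langle\phi\star g\rangle$; (b) ${\rm Sol}(\alpha,L)=\prod_{g\in G}\langle\phi\star g\rangle$; (c) ${\rm Sol}_{\rm per}(\alpha,L^{\rm per})$ is a union of finite dimensional $G$-modules and admits a natural structure of $G^{\rm pro}$-module, where $G^{\rm pro}$ is the profinite completion of $G$.
   Context: ${\rm Seq}(\mathbf C)$: complex sequences indexed by $t\in\mathbf Z_{\ge0}$ with shift $\sigma(x)^{(t)}=x^{(t+1)}$. $\mathcal C_c(G,\mathbf k)$: finitely supported functions $G\to\mathbf k$. The equation $\sigma(s)=\alpha\star s$ means $s_g^{(t+1)}=\sum_{h\in G}\alpha^{(t)}_hs^{(t)}_{h^{-1}g}$ for $s\in\mathcal C(G,{\rm Seq}(\mathbf C))$; its fundamental solution $\phi$ is the solution with $\phi^{(0)}_e=1$, $\phi^{(0)}_g=0$ for $g\neq e$. $G$ acts on the right by $(s\star g)_h=s_{hg^{-1}}$, and solutions are mapped to solutions. ${\rm Sol}(\alpha,L)$ is the $\mathbf C$-space of all solutions; ${\rm Sol}_c(\alpha,L^c)$ the solutions with $s^{(t)}$ of finite support for every $t$; ${\rm Sol}_{\rm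 per}(\alpha,L^{\rm per})$ the solutions that are $H$-periodic ($s_{gh}=s_g$ for $h\in H$) for some normal subgroup $H$ of finite index. $\langle\phi\star g\rangle$ is the complex line spanned by $\phi\star g$; $\prod_{g\in G}\langle\phi\star g\rangle$ denotes the set of sums $\sum_g c_g\,\phi\star g$, $c_g\in\mathbf C$, which are finite when evaluated at any $(g,t)$. *)

theory Defs
  imports Complex_Main
begin

text \<open>The discrete group G is a type of class group_add, written additively
  (not necessarily commutative): the neutral element e is 0, the product g h is g + h,
  and the inverse of h is - h.  Seq(C) is nat => complex with pointwise operations.\<close>

definition shift :: "(nat \<Rightarrow> complex) \<Rightarrow> nat \<Rightarrow> complex" where
  "shift x = (\<lambda>t. x (Suc t))"

definition sigma_subring_const_C :: "(nat \<Rightarrow> complex) set \<Rightarrow> bool" where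
  "sigma_subring_const_C K \<longleftrightarrow>
     (\<lambda>t. 0) \<in> K \<and> (\<lambda>t. 1) \<in> K \<and>
     (\<forall>x\<in>K. \<forall>y\<in>K. (\<lambda>t. x t + y t) \<in> K \<and> (\<lambda>t. x t * y t) \<in> K) \<and>
     (\<forall>x\<in>K. (\<lambda>t. - x t) \<in> K) \<and>
     (\<forall>x\<in>K. shift x \<in> K) \<and>
     {x\<in>K. shift x = x} = range (\<lambda>c::complex. \<lambda>t::nat. c)"

definition supp :: "('g \<Rightarrow> nat \<Rightarrow> complex) \<Rightarrow> 'g set" where
  "supp a = {h. a h \<noteq> (\<lambda>t. 0)}"

text \<open>s solves sigma(s) = alpha * s (alpha finitely supported).\<close>
definition is_sol :: "('g::group_add \<Rightarrow> nat \<Rightarrow> complex) \<Rightarrow> ('g \<Rightarrow> nat \<Rightarrow> complex) \<Rightarrow> bool" where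
  "is_sol \<alpha> s \<longleftrightarrow> (\<forall>g t. s g (Suc t) = (\<Sum>h\<in>supp \<alpha>. \<alpha> h t * s (- h + g) t))"

definition Sol :: "('g::group_add \<Rightarrow> nat \<Rightarrow> complex) \<Rightarrow> ('g \<Rightarrow> nat \<Rightarrow> complex) set" where
  "Sol \<alpha> = {s. is_sol \<alpha> s}"

definition Sol_c :: "('g::group_add \<Rightarrow> nat \<Rightarrow> complex) \<Rightarrow> ('g \<Rightarrow> nat \<Rightarrow> complex) set" where
  "Sol_c \<alpha> = {s. is_sol \<alpha> s \<and> (\<forall>t. finite {g. s g t \<noteq> 0})}"

definition ract :: "('g::group_add \<Rightarrow> nat \<Rightarrow> complex) \<Rightarrow> 'g \<Rightarrow> ('g \<Rightarrow> nat \<Rightarrow> complex)" where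
  "ract s g = (\<lambda>h. s (h + - g))"

definition nfi_subgroup :: "'g::group_add set \<Rightarrow> bool" where
  "nfi_subgroup H \<longleftrightarrow> 0 \<in> H \<and> (\<forall>a\<in>H. \<forall>b\<in>H. a + b \<in> H) \<and> (\<forall>a\<in>H. - a \<in> H) \<and>
     (\<forall>g. \<forall>h\<in>H. g + h + - g \<in> H) \<and>
     finite ((\<lambda>g. (\<lambda>h. g + h) ` H) ` UNIV)"

definition periodic :: "'g::group_add set \<Rightarrow> ('g \<Rightarrow> nat \<Rightarrow> complex) \<Rightarrow> bool" where
  "periodic H s \<longleftrightarrow> (\<forall>g. \<forall>h\<in>H. s (g + h) = s g)"

definition Sol_per :: "('g::group_add \<Rightarrow> nat \<Rightarrow> complex) \<Rightarrow> ('g \<Rightarrow> nat \<Rightarrow> complex) set" where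
  "Sol_per \<alpha> = {s. is_sol \<alpha> s \<and> (\<exists>H. nfi_subgroup H \<and> periodic H s)}"

definition fd_G_module :: "('g::group_add \<Rightarrow> nat \<Rightarrow> complex) set \<Rightarrow> bool" where
  "fd_G_module V \<longleftrightarrow>
     (\<exists>B. finite B \<and> V = {(\<lambda>h t. \<Sum>b\<in>B. c b * b h t) | c. True}) \<and>
     (\<forall>v\<in>V. \<forall>g. ract v g \<in> V)"

text \<open>Profinite completion of G: the inverse limit of the finite quotients G/H over normal
  subgroups of finite index H, realised as compatible families of cosets
  (extended by {} outside the index set).\<close>
definition profin :: "('g::group_add set \<Rightarrow> 'g set) set" where
  "profin = {x. (\<forall>H. nfi_subgroup H \<longrightarrow> x H \<in> (\<lambda>g. (\<lambda>h. g + h) ` H) ` UNIV) \<and>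
                (\<forall>H K. nfi_subgroup H \<and> nfi_subgroup K \<and> H \<subseteq> K \<longrightarrow> x H \<subseteq> x K) \<and>
                (\<forall>H. \<not> nfi_subgroup H \<longrightarrow> x H = {})}"

definition profin_mult :: "('g::group_add set \<Rightarrow> 'g set) \<Rightarrow> ('g set \<Rightarrow> 'g set) \<Rightarrow> ('g set \<Rightarrow> 'g set)" where
  "profin_mult x y = (\<lambda>H. {a + b | a b. a \<in> x H \<and> b \<in> y H})"

definition profin_of :: "'g::group_add \<Rightarrow> ('g set \<Rightarrow> 'g set)" where
  "profin_of g = (\<lambda>H. if nfi_subgroup H then (\<lambda>h. g + h) ` H else {})"

end

theory Submission
  imports Defs
begin

text \<open>A solution is determined by its value at \<open>t = 0\<close>.  Since the fundamental solution has
  finite support at every time, the superposition \<open>\<Sum>\<^sub>g c\<^sub>g \<phi>\<star>g\<close> is locally finite for every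
  \<open>c\<close>; it is the solution with initial value \<open>c\<close>, which gives (a) and (b).  A solution that is
  periodic under a normal subgroup \<open>H\<close> of finite index has only finitely many translates, which
  span a finite dimensional \<open>G\<close>-module, and \<open>s\<star>g\<close> only depends on the coset \<open>gH\<close>; so the
  action factors through the finite quotients \<open>G/H\<close> and extends to the profinite completion.\<close>

section \<open>Solutions and their translates\<close>

lemma is_sol_eqI:
  assumes "is_sol \<alpha> s" "is_sol \<alpha> s'" "\<And>g. s g 0 = s' g 0"
  shows "s = s'"
proof -
  have "\<forall>g. s g t = s' g t" for t
  proof (induction t)
    case 0
    then show ?case using assms(3) by simp
  next
    case (Suc t)
    then show ?case using assms(1,2) unfolding is_sol_def by simp
  qed
  then show ?thesis by (auto intro!: ext)
qed

lemma finite_support_is_sol: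
  assumes "finite (supp \<alpha>)" "is_sol \<alpha> s" "finite {g. s g 0 \<noteq> 0}"
  shows "finite {g. s g t \<noteq> 0}"
proof (induction t)
  case 0
  show ?case using assms(3) .
next
  case (Suc t)
  have "{g. s g (Suc t) \<noteq> 0} \<subseteq> (\<lambda>(k, d). k + d) ` (supp \<alpha> \<times> {g. s g t \<noteq> 0})"
  proof
    fix g assume "g \<in> {g. s g (Suc t) \<noteq> 0}"
    then have "(\<Sum>k\<in>supp \<alpha>. \<alpha> k t * s (- k + g) t) \<noteq> 0"
      using assms(2) unfolding is_sol_def by simp
    then obtain k where "k \<in> supp \<alpha>" "s (- k + g) t \<noteq> 0"
      by (metis (no_types, lifting) mult_zero_right sum.neutral)
    moreover have "g = k + (- k + g)" by (simp add: add.assoc[symmetric])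
    ultimately show "g \<in> (\<lambda>(k, d). k + d) ` (supp \<alpha> \<times> {g. s g t \<noteq> 0})" by force
  qed
  then show ?case using Suc assms(1) by (meson finite_SigmaI finite_imageI finite_subset)
qed

lemma ract_ract: "ract (ract s a) b = ract s (a + b)"
  by (simp add: ract_def minus_add add.assoc diff_conv_add_uminus del: add_uminus_conv_diff)

lemma ract_0 [simp]: "ract s 0 = s"
  by (simp add: ract_def)

lemma is_sol_ract: "is_sol \<alpha> s \<Longrightarrow> is_sol \<alpha> (ract s g)"
  by (simp add: is_sol_def ract_def add.assoc diff_conv_add_uminus del: add_uminus_conv_diff)

lemma finite_nonzero_ract:
  assumes "finite {d. \<phi> d t \<noteq> 0}"
  shows "finite {g. ract \<phi> g h t \<noteq> 0}"
proof -
  have "{g. ract \<phi> g h t \<noteq> 0} \<subseteq> (\<lambda>d. - d + h) ` {d. \<phi> d t \<noteq> 0}"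
  proof
    fix g assume "g \<in> {g. ract \<phi> g h t \<noteq> 0}"
    then have "h + - g \<in> {d. \<phi> d t \<noteq> 0}" by (simp add: ract_def)
    moreover have "g = - (h + - g) + h" by (simp add: minus_add add.assoc)
    ultimately show "g \<in> (\<lambda>d. - d + h) ` {d. \<phi> d t \<noteq> 0}" by (rule rev_image_eqI)
  qed
  then show ?thesis using assms finite_subset by blast
qed

lemma is_sol_sum:
  assumes "\<And>b. b \<in> B \<Longrightarrow> is_sol \<alpha> b"
  shows "is_sol \<alpha> (\<lambda>h t. \<Sum>b\<in>B. c b * b h t)"
  unfolding is_sol_def
proof (intro allI)
  fix g t
  have "(\<Sum>b\<in>B. c b * b g (Suc t)) = (\<Sum>b\<in>B. c b * (\<Sum>k\<in>supp \<alpha>. \<alpha> k t * b (- k + g) t))"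
    using assms unfolding is_sol_def by simp
  also have "\<dots> = (\<Sum>k\<in>supp \<alpha>. \<alpha> k t * (\<Sum>b\<in>B. c b * b (- k + g) t))"
    by (simp add: sum_distrib_left sum.swap[of _ B] mult.left_commute)
  finally show "(\<Sum>b\<in>B. c b * b g (Suc t)) = (\<Sum>k\<in>supp \<alpha>. \<alpha> k t * (\<Sum>b\<in>B. c b * b (- k + g) t))" .
qed

section \<open>Superpositions of translates of the fundamental solution\<close>

definition lin_comb :: "('g::group_add \<Rightarrow> nat \<Rightarrow> complex) \<Rightarrow> ('g \<Rightarrow> complex) \<Rightarrow> 'g \<Rightarrow> nat \<Rightarrow> complex" where
  "lin_comb \<phi> c = (\<lambda>h t. \<Sum>g | c g * ract \<phi> g h t \<noteq> 0. c g * ract \<phi> g h t)"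

lemma lin_comb_eq_sum:
  assumes "finite F" "{g. c g * ract \<phi> g h t \<noteq> 0} \<subseteq> F"
  shows "lin_comb \<phi> c h t = (\<Sum>g\<in>F. c g * ract \<phi> g h t)"
  unfolding lin_comb_def using assms by (intro sum.mono_neutral_left) auto

locale fundamental_solution =
  fixes \<alpha> \<phi> :: "'g::group_add \<Rightarrow> nat \<Rightarrow> complex"
  assumes finite_supp: "finite (supp \<alpha>)"
    and is_sol: "is_sol \<alpha> \<phi>"
    and initial: "\<And>g. \<phi> g 0 = (if g = 0 then 1 else 0)"
begin

lemma finite_nonzero: "finite {g. \<phi> g t \<noteq> 0}"
proof (rule finite_support_is_sol[OF finite_supp is_sol])
  show "finite {g. \<phi> g 0 \<noteq> 0}" by (rule finite_subset[of _ "{0}"]) (auto simp: initial)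
qed

lemma finite_nonzero_terms: "finite {g. c g * ract \<phi> g h t \<noteq> 0}"
  by (rule finite_subset[OF _ finite_nonzero_ract[OF finite_nonzero]]) auto

lemma lin_comb_is_sol: "is_sol \<alpha> (lin_comb \<phi> c)"
  unfolding is_sol_def
proof (intro allI)
  fix h t
  define F where "F = {g. ract \<phi> g h (Suc t) \<noteq> 0} \<union> (\<Union>k\<in>supp \<alpha>. {g. ract \<phi> g (- k + h) t \<noteq> 0})"
  have F: "finite F"
    unfolding F_def using finite_supp finite_nonzero_ract[OF finite_nonzero] by auto
  have "lin_comb \<phi> c h (Suc t) = (\<Sum>g\<in>F. c g * ract \<phi> g h (Suc t))"
    by (rule lin_comb_eq_sum[OF F]) (auto simp: F_def)
  also have "\<dots> = (\<Sum>g\<in>F. c g * (\<Sum>k\<in>supp \<alpha>. \<alpha> k t * ract \<phi> g (- k + h) t))"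
    using is_sol_ract[OF is_sol] unfolding is_sol_def by simp
  also have "\<dots> = (\<Sum>k\<in>supp \<alpha>. \<alpha> k t * (\<Sum>g\<in>F. c g * ract \<phi> g (- k + h) t))"
    by (simp add: sum_distrib_left sum.swap[of _ F] mult.left_commute)
  also have "\<dots> = (\<Sum>k\<in>supp \<alpha>. \<alpha> k t * lin_comb \<phi> c (- k + h) t)"
    by (intro sum.cong refl arg_cong2[where f="(*)"] lin_comb_eq_sum[OF F, symmetric])
      (auto simp: F_def)
  finally show "lin_comb \<phi> c h (Suc t) = (\<Sum>k\<in>supp \<alpha>. \<alpha> k t * lin_comb \<phi> c (- k + h) t)" .
qed

lemma lin_comb_initial [simp]: "lin_comb \<phi> c h 0 = c h"
proof -
  have "lin_comb \<phi> c h 0 = (\<Sum>g\<in>{h}. c g * ract \<phi> g h 0)"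
    by (rule lin_comb_eq_sum) (auto simp: ract_def initial split: if_splits)
  then show ?thesis by (simp add: ract_def initial)
qed

lemma sol_eq_lin_comb_initial: "is_sol \<alpha> s \<Longrightarrow> s = lin_comb \<phi> (\<lambda>g. s g 0)"
  by (erule is_sol_eqI[OF _ lin_comb_is_sol]) simp

lemma Sol_eq_range_lin_comb: "Sol \<alpha> = range (lin_comb \<phi>)"
  using sol_eq_lin_comb_initial lin_comb_is_sol by (auto simp: Sol_def)

lemma finite_lin_comb:
  assumes "finite {g. c g \<noteq> 0}"
  shows "(\<lambda>h t. \<Sum>g\<in>{g. c g \<noteq> 0}. c g * ract \<phi> g h t) = lin_comb \<phi> c"
  using assms by (intro ext lin_comb_eq_sum[symmetric]) auto

lemma Sol_c_eq_finite_lin_combs: "Sol_c \<alpha> = {lin_comb \<phi> c | c. finite {g. c g \<noteq> 0}}"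
proof (intro equalityI subsetI)
  fix s assume "s \<in> Sol_c \<alpha>"
  then have "is_sol \<alpha> s" "finite {g. s g 0 \<noteq> 0}" by (auto simp: Sol_c_def)
  then show "s \<in> {lin_comb \<phi> c | c. finite {g. c g \<noteq> 0}}"
    using sol_eq_lin_comb_initial by blast
next
  fix s assume "s \<in> {lin_comb \<phi> c | c. finite {g. c g \<noteq> 0}}"
  then obtain c where s: "s = lin_comb \<phi> c" and c: "finite {g. c g \<noteq> 0}" by blast
  have "finite {g. s g t \<noteq> 0}" for t
    using finite_support_is_sol[OF finite_supp lin_comb_is_sol] c by (simp add: s)
  then show "s \<in> Sol_c \<alpha>" by (simp add: Sol_c_def s lin_comb_is_sol)
qed

end

section \<open>Periodic solutions\<close>

definition fi_periodic :: "('g::group_add \<Rightarrow> nat \<Rightarrow> complex) \<Rightarrow> bool" where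
  "fi_periodic s \<longleftrightarrow> (\<exists>H. nfi_subgroup H \<and> periodic H s)"

lemma Sol_per_eq: "Sol_per \<alpha> = {s. is_sol \<alpha> s \<and> fi_periodic s}"
  by (simp add: Sol_per_def fi_periodic_def)

lemma Sol_per_fi_periodic: "s \<in> Sol_per \<alpha> \<Longrightarrow> fi_periodic s"
  by (simp add: Sol_per_eq)

lemma nfi_subgroup_Int:
  assumes "nfi_subgroup H1" "nfi_subgroup H2"
  shows "nfi_subgroup (H1 \<inter> H2)"
proof -
  let ?cosets = "\<lambda>H. (\<lambda>g. (+) g ` H) ` UNIV"
  have "?cosets (H1 \<inter> H2) \<subseteq> (\<lambda>(A, B). A \<inter> B) ` (?cosets H1 \<times> ?cosets H2)"
  proof
    fix C assume "C \<in> ?cosets (H1 \<inter> H2)"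
    then obtain g where C: "C = (+) g ` (H1 \<inter> H2)" by blast
    have "inj ((+) g)" by (simp add: inj_def)
    then have "C = (\<lambda>(A, B). A \<inter> B) ((+) g ` H1, (+) g ` H2)"
      using C by (simp add: image_Int)
    then show "C \<in> (\<lambda>(A, B). A \<inter> B) ` (?cosets H1 \<times> ?cosets H2)" by blast
  qed
  moreover have "finite (?cosets H1 \<times> ?cosets H2)"
    using assms by (simp add: nfi_subgroup_def)
  ultimately have "finite (?cosets (H1 \<inter> H2))"
    by (meson finite_imageI finite_subset)
  then show ?thesis using assms by (auto simp: nfi_subgroup_def)
qed

lemma periodic_mono: "periodic H s \<Longrightarrow> K \<subseteq> H \<Longrightarrow> periodic K s"
  by (auto simp: periodic_def)

lemma periodic_sum: "(\<And>b. b \<in> B \<Longrightarrow> periodic H b) \<Longrightarrow> periodic H (\<lambda>h t. \<Sum>b\<in>B. c b * b h t)"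
  by (simp add: periodic_def)

lemma periodic_ract:
  assumes "nfi_subgroup H" "periodic H s"
  shows "periodic H (ract s g)"
  unfolding periodic_def
proof (intro allI ballI)
  fix x k assume "k \<in> H"
  then have "g + k + - g \<in> H" using assms(1) by (simp add: nfi_subgroup_def del: add_uminus_conv_diff)
  moreover have "x + k + - g = (x + - g) + (g + k + - g)"
    by (simp add: add.assoc diff_conv_add_uminus del: add_uminus_conv_diff)
  ultimately show "ract s g (x + k) = ract s g x"
    using assms(2) by (simp add: ract_def periodic_def del: add_uminus_conv_diff)
qed

lemma ract_period:
  assumes "nfi_subgroup H" "periodic H s" "k \<in> H"
  shows "ract s k = s"
  using assms by (auto simp: ract_def periodic_def nfi_subgroup_def simp del: add_uminus_conv_diff)

lemma ract_add_period:
  assumes "nfi_subgroup H" "periodic H s" "k \<in> H"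
  shows "ract s (g + k) = ract s g"
  using ract_period[OF assms(1) periodic_ract[OF assms(1,2)] assms(3)] by (simp add: ract_ract)

lemma fi_periodic_ract: "fi_periodic s \<Longrightarrow> fi_periodic (ract s g)"
  using periodic_ract by (auto simp: fi_periodic_def)

lemma finite_range_ract:
  assumes H: "nfi_subgroup H" and s: "periodic H s"
  shows "finite (range (ract s))"
proof -
  let ?rep = "\<lambda>C. ract s (SOME g. g \<in> C)"
  have "ract s g = ?rep ((+) g ` H)" for g
  proof -
    have "g \<in> (+) g ` H" using H by (auto simp: nfi_subgroup_def intro: image_eqI[of _ _ 0])
    then have "(SOME g'. g' \<in> (+) g ` H) \<in> (+) g ` H" by (rule someI)
    then obtain k where "k \<in> H" "(SOME g'. g' \<in> (+) g ` H) = g + k" by blast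
    then show ?thesis using ract_add_period[OF H s] by simp
  qed
  then have "range (ract s) \<subseteq> ?rep ` ((\<lambda>g. (+) g ` H) ` UNIV)" by blast
  moreover have "finite ((\<lambda>g. (+) g ` H) ` UNIV)" using H by (simp add: nfi_subgroup_def)
  ultimately show ?thesis by (meson finite_imageI finite_subset)
qed

lemma fd_G_module_span_orbit:
  assumes B: "finite (range (ract s))"
  shows "fd_G_module {(\<lambda>h t. \<Sum>b\<in>range (ract s). c b * b h t) | c. True}"
  unfolding fd_G_module_def
proof (intro conjI ballI allI)
  fix v g assume "v \<in> {(\<lambda>h t. \<Sum>b\<in>range (ract s). c b * b h t) | c. True}"
  then obtain c where v: "v = (\<lambda>h t. \<Sum>b\<in>range (ract s). c b * b h t)" by blast
  have "ract v g = (\<lambda>h t. \<Sum>b\<in>range (ract s). c (ract b (- g)) * b h t)"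
  proof (intro ext)
    fix h t
    have "ract v g h t = (\<Sum>b\<in>range (ract s). c b * ract b g h t)" by (simp add: v ract_def)
    also have "\<dots> = (\<Sum>b\<in>range (ract s). c (ract b (- g)) * b h t)"
      by (rule sum.reindex_bij_witness[where i="\<lambda>b. ract b (- g)" and j="\<lambda>b. ract b g"])
        (auto simp: ract_ract)
    finally show "ract v g h t = (\<Sum>b\<in>range (ract s). c (ract b (- g)) * b h t)" .
  qed
  moreover have "(\<lambda>h t. \<Sum>b\<in>range (ract s). c (ract b (- g)) * b h t)
      \<in> {(\<lambda>h t. \<Sum>b\<in>range (ract s). c b * b h t) | c. True}"
    by (intro CollectI exI[of _ "\<lambda>b. c (ract b (- g))"] conjI refl TrueI)
  ultimately show "ract v g \<in> {(\<lambda>h t. \<Sum>b\<in>range (ract s). c b * b h t) | c. True}"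
    by (simp only:)
next
  show "\<exists>B. finite B \<and> {(\<lambda>h t. \<Sum>b\<in>range (ract s). c b * b h t) | c. True} =
      {(\<lambda>h t. \<Sum>b\<in>B. c b * b h t) | c. True}"
    by (intro exI[of _ "range (ract s)"] conjI B refl)
qed

lemma Sol_per_in_fd_G_module:
  assumes "s \<in> Sol_per \<alpha>"
  shows "\<exists>V. s \<in> V \<and> V \<subseteq> Sol_per \<alpha> \<and> fd_G_module V"
proof -
  obtain H where s: "is_sol \<alpha> s" and H: "nfi_subgroup H" "periodic H s"
    using assms by (auto simp: Sol_per_def)
  let ?B = "range (ract s)"
  let ?V = "{(\<lambda>h t. \<Sum>b\<in>?B. c b * b h t) | c. True}"
  have B: "finite ?B" by (rule finite_range_ract[OF H])
  have sB: "s \<in> ?B" by (metis ract_0 rangeI)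
  have "(\<lambda>h t. \<Sum>b\<in>?B. (if b = s then 1 else 0) * b h t) = s"
  proof (intro ext)
    fix h t
    have "(\<Sum>b\<in>?B. (if b = s then 1 else 0) * b h t) = (\<Sum>b\<in>?B. if b = s then s h t else 0)"
      by (rule sum.cong) auto
    then show "(\<Sum>b\<in>?B. (if b = s then 1 else 0) * b h t) = s h t" using B sB by simp
  qed
  moreover have "(\<lambda>h t. \<Sum>b\<in>?B. (if b = s then 1 else 0) * b h t) \<in> ?V"
    by (intro CollectI exI[of _ "\<lambda>b. if b = s then 1 else 0"] conjI refl TrueI)
  ultimately have "s \<in> ?V" by (simp only:)
  moreover have "?V \<subseteq> Sol_per \<alpha>"
  proof
    fix v assume "v \<in> ?V"
    then obtain c where v: "v = (\<lambda>h t. \<Sum>b\<in>?B. c b * b h t)" by blast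
    have "is_sol \<alpha> v" unfolding v by (rule is_sol_sum) (auto intro: is_sol_ract[OF s])
    moreover have "periodic H v" unfolding v by (rule periodic_sum) (auto intro: periodic_ract[OF H])
    ultimately show "v \<in> Sol_per \<alpha>" using H(1) by (auto simp: Sol_per_def)
  qed
  ultimately show ?thesis by (intro exI[of _ ?V] conjI fd_G_module_span_orbit[OF B])
qed

section \<open>The action of the profinite completion\<close>

lemma profin_nonempty:
  assumes "x \<in> profin" "nfi_subgroup H"
  obtains g where "g \<in> x H"
proof -
  obtain a where "x H = (+) a ` H" using assms by (auto simp: profin_def)
  moreover have "0 \<in> H" using assms(2) by (simp add: nfi_subgroup_def)
  ultimately have "a \<in> x H" by (metis add_0_right image_eqI)
  then show ?thesis using that by blast
qed

lemma profin_same_coset: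
  assumes "x \<in> profin" "nfi_subgroup H" "a \<in> x H" "b \<in> x H"
  shows "\<exists>k\<in>H. a = b + k"
proof -
  obtain c where "x H = (+) c ` H" using assms by (auto simp: profin_def)
  then obtain k1 k2 where k: "k1 \<in> H" "k2 \<in> H" "a = c + k1" "b = c + k2" using assms by auto
  then have "- k2 + k1 \<in> H" using assms(2) by (simp add: nfi_subgroup_def)
  with k show ?thesis by (simp add: add.assoc[symmetric] bexI[of _ "- k2 + k1"])
qed

text \<open>The compatibility of \<open>x\<close> under \<open>H\<^sub>1 \<inter> H\<^sub>2 \<subseteq> H\<^sub>i\<close> makes \<open>s\<star>x\<close> independent of the period.\<close>
lemma ract_profin_eq:
  assumes H1: "nfi_subgroup H1" "periodic H1 s" and H2: "nfi_subgroup H2" "periodic H2 s"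
    and x: "x \<in> profin" and g: "g1 \<in> x H1" "g2 \<in> x H2"
  shows "ract s g1 = ract s g2"
proof -
  have K: "nfi_subgroup (H1 \<inter> H2)" using nfi_subgroup_Int H1 H2 by blast
  obtain c where c: "c \<in> x (H1 \<inter> H2)" using profin_nonempty[OF x K] by blast
  have "x (H1 \<inter> H2) \<subseteq> x H1" "x (H1 \<inter> H2) \<subseteq> x H2"
    using H1 H2 K x by (auto simp: profin_def)
  then have "\<exists>k\<in>H1. g1 = c + k" "\<exists>k\<in>H2. g2 = c + k"
    using profin_same_coset[OF x] H1 H2 g c by blast+
  then show ?thesis using ract_add_period H1 H2 by metis
qed

definition period_of :: "('g::group_add \<Rightarrow> nat \<Rightarrow> complex) \<Rightarrow> 'g set" where
  "period_of s = (SOME H. nfi_subgroup H \<and> periodic H s)"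

definition profin_act :: "('g::group_add \<Rightarrow> nat \<Rightarrow> complex) \<Rightarrow> ('g set \<Rightarrow> 'g set) \<Rightarrow> 'g \<Rightarrow> nat \<Rightarrow> complex" where
  "profin_act s x = ract s (SOME g. g \<in> x (period_of s))"

lemma period_of: "fi_periodic s \<Longrightarrow> nfi_subgroup (period_of s) \<and> periodic (period_of s) s"
  unfolding period_of_def fi_periodic_def by (rule someI_ex)

lemma profin_act_eq:
  assumes "nfi_subgroup H" "periodic H s" "x \<in> profin" "g \<in> x H"
  shows "profin_act s x = ract s g"
proof -
  have P: "nfi_subgroup (period_of s)" "periodic (period_of s) s"
    using period_of assms(1,2) by (auto simp: fi_periodic_def)
  obtain a where "a \<in> x (period_of s)" using profin_nonempty[OF assms(3) P(1)] .
  then have "(SOME g. g \<in> x (period_of s)) \<in> x (period_of s)" by (rule someI)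
  then show ?thesis
    unfolding profin_act_def using ract_profin_eq[OF P assms(1-3) _ assms(4)] by blast
qed

lemma profin_act_is_ract:
  assumes "fi_periodic s" "x \<in> profin"
  obtains g where "profin_act s x = ract s g"
  using assms profin_act_eq profin_nonempty unfolding fi_periodic_def by metis

lemma profin_act_profin_of:
  assumes "fi_periodic s"
  shows "profin_act s (profin_of g) = ract s g"
proof -
  obtain H where H: "nfi_subgroup H" "periodic H s" using assms by (auto simp: fi_periodic_def)
  have "profin_of g \<in> profin" by (auto simp: profin_def profin_of_def)
  moreover have "g \<in> profin_of g H"
    using H(1) by (auto simp: profin_of_def nfi_subgroup_def intro: image_eqI[of _ _ 0])
  ultimately show ?thesis by (rule profin_act_eq[OF H])
qed

lemma profin_act_mult:
  assumes s: "fi_periodic s" and x: "x \<in> profin" and y: "y \<in> profin"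
  shows "profin_act s (profin_mult x y) = profin_act (profin_act s x) y"
proof -
  define H where "H = period_of s"
  have H: "nfi_subgroup H" "periodic H s" using period_of[OF s] by (auto simp: H_def)
  obtain a where "a \<in> x H" using profin_nonempty[OF x H(1)] .
  moreover obtain b where "b \<in> y H" using profin_nonempty[OF y H(1)] .
  ultimately have "a + b \<in> profin_mult x y H" by (auto simp: profin_mult_def)
  then have "(SOME g. g \<in> profin_mult x y H) \<in> profin_mult x y H" by (rule someI)
  then obtain a' b' where ab: "(SOME g. g \<in> profin_mult x y H) = a' + b'" "a' \<in> x H" "b' \<in> y H"
    by (auto simp: profin_mult_def)
  have "profin_act s (profin_mult x y) = ract (ract s a') b'"
    by (simp add: profin_act_def H_def[symmetric] ab(1) ract_ract)
  also have "\<dots> = profin_act (ract s a') y"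
    using profin_act_eq[OF H(1) periodic_ract[OF H] y ab(3)] by simp
  also have "ract s a' = profin_act s x"
    using profin_act_eq[OF H x ab(2)] by simp
  finally show ?thesis .
qed

lemma profin_act_linear:
  assumes "fi_periodic s" "fi_periodic s'" "x \<in> profin"
  shows "profin_act (\<lambda>h t. a * s h t + b * s' h t) x = (\<lambda>h t. a * profin_act s x h t + b * profin_act s' x h t)"
proof -
  obtain H1 H2 where H: "nfi_subgroup H1" "periodic H1 s" "nfi_subgroup H2" "periodic H2 s'"
    using assms(1,2) by (auto simp: fi_periodic_def)
  let ?K = "H1 \<inter> H2"
  have K: "nfi_subgroup ?K" using nfi_subgroup_Int H by blast
  have "periodic ?K s" "periodic ?K s'" using periodic_mono H by blast+
  moreover from this have "periodic ?K (\<lambda>h t. a * s h t + b * s' h t)"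
    by (simp add: periodic_def)
  moreover obtain g where "g \<in> x ?K" using profin_nonempty[OF assms(3) K] .
  ultimately show ?thesis
    using profin_act_eq[OF K _ assms(3)] by (simp add: ract_def)
qed

lemma profin_act_locally_constant:
  assumes "fi_periodic s"
  shows "\<exists>H. nfi_subgroup H \<and> (\<forall>x\<in>profin. \<forall>y\<in>profin. x H = y H \<longrightarrow> profin_act s x = profin_act s y)"
  using period_of[OF assms] by (auto simp: profin_act_def)

lemma profin_act_Sol_per:
  assumes s: "s \<in> Sol_per \<alpha>" and x: "x \<in> profin"
  shows "profin_act s x \<in> Sol_per \<alpha>"
proof -
  obtain g where "profin_act s x = ract s g" using profin_act_is_ract[OF Sol_per_fi_periodic[OF s] x] .
  then show ?thesis using s is_sol_ract fi_periodic_ract by (auto simp: Sol_per_eq)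
qed

theorem proposition1p12:
  fixes K :: "(nat \<Rightarrow> complex) set"
    and \<alpha> \<phi> :: "'g::group_add \<Rightarrow> nat \<Rightarrow> complex"
  assumes K: "sigma_subring_const_C K"
    and \<alpha>_fin: "finite (supp \<alpha>)"
    and \<alpha>_K: "\<forall>h. \<alpha> h \<in> K"
    and \<phi>_sol: "is_sol \<alpha> \<phi>"
    and \<phi>_init: "\<forall>g. \<phi> g 0 = (if g = 0 then 1 else 0)"
  shows
    \<comment> \<open>(a) Sol_c is the direct sum of the lines spanned by the translates of phi\<close>
    "(Sol_c \<alpha> = {(\<lambda>h t. \<Sum>g\<in>{g. c g \<noteq> 0}. c g * ract \<phi> g h t) | c. finite {g. c g \<noteq> 0}}) \<and>
     (\<forall>c. finite {g. c g \<noteq> 0} \<longrightarrow>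
          (\<lambda>h t. \<Sum>g\<in>{g. c g \<noteq> 0}. c g * ract \<phi> g h t) = (\<lambda>h t. 0) \<longrightarrow> (\<forall>g. c g = 0)) \<and>
     \<comment> \<open>(b) Sol is the set of pointwise-finite sums of multiples of the translates of phi\<close>
     (Sol \<alpha> = {(\<lambda>h t. \<Sum>g | c g * ract \<phi> g h t \<noteq> 0. c g * ract \<phi> g h t) | c.
                  \<forall>h t. finite {g. c g * ract \<phi> g h t \<noteq> 0}}) \<and>
     \<comment> \<open>(c1) Sol_per is a union of finite dimensional G-modules\<close>
     (\<forall>s\<in>Sol_per \<alpha>. \<exists>V. s \<in> V \<and> V \<subseteq> Sol_per \<alpha> \<and> fd_G_module V) \<and>
     \<comment> \<open>(c2) the G-action on Sol_per extends to a continuous linear action of G^pro\<close>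
     (\<exists>act :: ('g \<Rightarrow> nat \<Rightarrow> complex) \<Rightarrow> ('g set \<Rightarrow> 'g set) \<Rightarrow> ('g \<Rightarrow> nat \<Rightarrow> complex).
        (\<forall>s\<in>Sol_per \<alpha>. \<forall>x\<in>profin. act s x \<in> Sol_per \<alpha>) \<and>
        (\<forall>s\<in>Sol_per \<alpha>. \<forall>g. act s (profin_of g) = ract s g) \<and>
        (\<forall>s\<in>Sol_per \<alpha>. \<forall>x\<in>profin. \<forall>y\<in>profin. act s (profin_mult x y) = act (act s x) y) \<and>
        (\<forall>s\<in>Sol_per \<alpha>. \<forall>s'\<in>Sol_per \<alpha>. \<forall>a b::complex. \<forall>x\<in>profin.
            act (\<lambda>h t. a * s h t + b * s' h t) x = (\<lambda>h t. a * act s x h t + b * act s' x h t)) \<and>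
        (\<forall>s\<in>Sol_per \<alpha>. \<exists>H. nfi_subgroup H \<and>
            (\<forall>x\<in>profin. \<forall>y\<in>profin. x H = y H \<longrightarrow> act s x = act s y)))"
proof -
  \<comment> \<open>The ring \<open>K\<close> of coefficients plays no role: the result holds for arbitrary sequences.\<close>
  interpret fundamental_solution \<alpha> \<phi> using \<alpha>_fin \<phi>_sol \<phi>_init by unfold_locales auto
  have a: "Sol_c \<alpha> = {(\<lambda>h t. \<Sum>g\<in>{g. c g \<noteq> 0}. c g * ract \<phi> g h t) | c. finite {g. c g \<noteq> 0}}"
    unfolding Sol_c_eq_finite_lin_combs setcompr_eq_image by (rule image_cong) (simp_all add: finite_lin_comb)
  have a_free: "c g = 0"
    if "finite {g. c g \<noteq> 0}" "(\<lambda>h t. \<Sum>g\<in>{g. c g \<noteq> 0}. c g * ract \<phi> g h t) = (\<lambda>h t. 0)" for c g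
  proof -
    have "lin_comb \<phi> c = (\<lambda>h t. 0)" using that finite_lin_comb by simp
    then show ?thesis by (metis lin_comb_initial)
  qed
  have b: "Sol \<alpha> = {(\<lambda>h t. \<Sum>g | c g * ract \<phi> g h t \<noteq> 0. c g * ract \<phi> g h t) | c.
                  \<forall>h t. finite {g. c g * ract \<phi> g h t \<noteq> 0}}"
  proof -
    have "{c. \<forall>h t. finite {g. c g * ract \<phi> g h t \<noteq> 0}} = UNIV" using finite_nonzero_terms by blast
    then show ?thesis unfolding setcompr_eq_image Sol_eq_range_lin_comb lin_comb_def[abs_def] by simp
  qed
  show ?thesis
    by (intro conjI exI[of _ profin_act] ballI allI impI)
      (rule a a_free b Sol_per_in_fd_G_module profin_act_Sol_per
        profin_act_profin_of[OF Sol_per_fi_periodic] profin_act_mult[OF Sol_per_fi_periodic]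
        profin_act_linear[OF Sol_per_fi_periodic Sol_per_fi_periodic]
        profin_act_locally_constant[OF Sol_per_fi_periodic]; assumption)+
qed

end
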